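(* Let $t=a^id^j$ and let $W$ be a finite-dimensional left $\mathcal{O}_{nc}(B)$-comodule all of whose weights equal $t$. Then the coaction of $W$ is $w\mapsto t\otimes w$ for all $w\in W$; in particular $W$ is a direct sum of copies of $k_t$ and its coaction takes values in the subcoalgebra of $\mathcal{O}_{nc}(B)$ spanned by the monomials $a^pd^q$.
   Context: $\mathcal{O}_{nc}(\mathrm{GL}_2)$ is the Hopf algebra generated by $a,b,c,d,\delta,\delta^{-1}$ with relations $ac=ca$, $bd=db$, $ad-cb=\delta=da-bc$, $\delta\delta^{-1}=1=\delta^{-1}\delta$, $a\delta^{-1}d-b\delta^{-1}c=1=d\delta^{-1}a-c\delta^{-1}b$, $b\delta^{-1}a=a\delta^{-1}b$, $c\delta^{-1}d=d\delta^{-1}c$, with $\Delta(a)=a\otimes a+b\otimes c$, $\Delta(b)=a\otimes b+b\otimes d$, $\Delta(c)=c\otimes a+d\otimes c$, $\Delta(d)=c\otimes b+d\otimes d$, $\Delta(\delta^{\pm1})=\delta^{\pm1}\otimes\delta^{\pm1}$. $\mathcal{O}_{nc}(B)=\mathcal{O}_{nc}(\mathrm{GL}_2)/(b)$ (a quotient Hopf algebra; images of $a,d$ are invertible grouplikes), and $\mathcal{O}(T)=\mathcal{O}_{nc}(\mathrm{GL}_2)/(b,c)\cong k[a^{\pm1},d^{\pm1}]$, a quotient of $\mathcal{O}_{nc}(B)$. The weights of an $\mathcal{O}_{nc}(B)$-comodule $W$ are the monomials $t$ with nonzero weight space $W_t=\{w: w\mapsto t\otimes w\}$ for the induced $\mathcal{O}(T)$-coaction.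 $k_t$ is the one-dimensional comodule $1\mapsto t\otimes1$. *)

theory Defs
  imports "HOL-Library.Poly_Mapping"
begin

text \<open>Generators: a, b, c, d, delta (Dl) and delta inverse (Di).\<close>
datatype gen = A | B | C | D | Dl | Di

type_synonym word = "gen list"

type_synonym 'k fa = "word \<Rightarrow>\<^sub>0 'k"

type_synonym 'k fa2 = "(word \<times> word) \<Rightarrow>\<^sub>0 'k"

definition wd :: "word \<Rightarrow> 'k::field fa" where
  "wd u = Poly_Mapping.single u 1"

definition fa_smult :: "'k::field \<Rightarrow> 'k fa \<Rightarrow> 'k fa" where
  "fa_smult c f = (\<Sum>u\<in>Poly_Mapping.keys f. Poly_Mapping.single u (c * Poly_Mapping.lookup f u))"

definition fa_mult :: "'k::field fa \<Rightarrow> 'k fa \<Rightarrow> 'k fa" where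
  "fa_mult f g = (\<Sum>u\<in>Poly_Mapping.keys f. \<Sum>v\<in>Poly_Mapping.keys g. Poly_Mapping.single (u @ v) (Poly_Mapping.lookup f u * Poly_Mapping.lookup g v))"

definition tens :: "'k::field fa \<Rightarrow> 'k fa \<Rightarrow> 'k fa2" where
  "tens f g = (\<Sum>u\<in>Poly_Mapping.keys f. \<Sum>v\<in>Poly_Mapping.keys g. Poly_Mapping.single (u, v) (Poly_Mapping.lookup f u * Poly_Mapping.lookup g v))"

definition fa2_smult :: "'k::field \<Rightarrow> 'k fa2 \<Rightarrow> 'k fa2" where
  "fa2_smult c f = (\<Sum>u\<in>Poly_Mapping.keys f. Poly_Mapping.single u (c * Poly_Mapping.lookup f u))"

definition fa2_mult :: "'k::field fa2 \<Rightarrow> 'k fa2 \<Rightarrow> 'k fa2" where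
  "fa2_mult f g = (\<Sum>p\<in>Poly_Mapping.keys f. \<Sum>q\<in>Poly_Mapping.keys g.
      Poly_Mapping.single (fst p @ fst q, snd p @ snd q) (Poly_Mapping.lookup f p * Poly_Mapping.lookup g q))"

inductive_set two_sided_ideal :: "'k::field fa set \<Rightarrow> 'k fa set" for R where
  gen: "r \<in> R \<Longrightarrow> r \<in> two_sided_ideal R"
| zero: "0 \<in> two_sided_ideal R"
| add: "x \<in> two_sided_ideal R \<Longrightarrow> y \<in> two_sided_ideal R \<Longrightarrow> x + y \<in> two_sided_ideal R"
| mult: "x \<in> two_sided_ideal R \<Longrightarrow>
           fa_mult (fa_smult c (wd u)) (fa_mult x (wd v)) \<in> two_sided_ideal R"

text \<open>For a subspace J of the free algebra F, the kernel J (x) F + F (x) J of the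
  projection F (x) F \<rightarrow> (F/J) (x) (F/J).\<close>
inductive_set tens_ideal :: "'k::field fa set \<Rightarrow> 'k fa2 set" for J where
  zero: "0 \<in> tens_ideal J"
| add: "x \<in> tens_ideal J \<Longrightarrow> y \<in> tens_ideal J \<Longrightarrow> x + y \<in> tens_ideal J"
| left: "x \<in> J \<Longrightarrow> tens x y \<in> tens_ideal J"
| right: "y \<in> J \<Longrightarrow> tens x y \<in> tens_ideal J"


definition rels_GL2 :: "'k::field fa set" where
  "rels_GL2 = {
     wd [A,C] - wd [C,A],
     wd [B,D] - wd [D,B],
     wd [A,D] - wd [C,B] - wd [Dl],
     wd [D,A] - wd [B,C] - wd [Dl],
     wd [Dl,Di] - wd [],
     wd [Di,Dl] - wd [],
     wd [A,Di,D] - wd [B,Di,C] - wd [],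
     wd [D,Di,A] - wd [C,Di,B] - wd [],
     wd [B,Di,A] - wd [A,Di,B],
     wd [C,Di,D] - wd [D,Di,C] }"

text \<open>Ideal defining O_nc(GL_2), O_nc(B) = O_nc(GL_2)/(b), O(T) = O_nc(GL_2)/(b,c).\<close>
definition J_GL2 :: "'k::field fa set" where
  "J_GL2 = two_sided_ideal rels_GL2"

definition J_B :: "'k::field fa set" where
  "J_B = two_sided_ideal (rels_GL2 \<union> {wd [B]})"

definition J_T :: "'k::field fa set" where
  "J_T = two_sided_ideal (rels_GL2 \<union> {wd [B], wd [C]})"

fun Delta_gen :: "gen \<Rightarrow> 'k::field fa2" where
  "Delta_gen A = tens (wd [A]) (wd [A]) + tens (wd [B]) (wd [C])"
| "Delta_gen B = tens (wd [A]) (wd [B]) + tens (wd [B]) (wd [D])"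
| "Delta_gen C = tens (wd [C]) (wd [A]) + tens (wd [D]) (wd [C])"
| "Delta_gen D = tens (wd [C]) (wd [B]) + tens (wd [D]) (wd [D])"
| "Delta_gen Dl = tens (wd [Dl]) (wd [Dl])"
| "Delta_gen Di = tens (wd [Di]) (wd [Di])"

definition Delta_word :: "word \<Rightarrow> 'k::field fa2" where
  "Delta_word u = foldr (\<lambda>g acc. fa2_mult (Delta_gen g) acc) u (Poly_Mapping.single ([], []) 1)"

definition Delta :: "'k::field fa \<Rightarrow> 'k fa2" where
  "Delta f = (\<Sum>u\<in>Poly_Mapping.keys f. fa2_smult (Poly_Mapping.lookup f u) (Delta_word u))"

fun eps_gen :: "gen \<Rightarrow> 'k::field" where
  "eps_gen A = 1" | "eps_gen B = 0" | "eps_gen C = 0" | "eps_gen D = 1"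
| "eps_gen Dl = 1" | "eps_gen Di = 1"

definition eps :: "'k::field fa \<Rightarrow> 'k" where
  "eps f = (\<Sum>u\<in>Poly_Mapping.keys f. Poly_Mapping.lookup f u * (\<Prod>g\<leftarrow>u. eps_gen g))"

text \<open>In O_nc(B) (and in O(T)) the images of a and d are invertible with
  a^-1 = delta^-1 d and d^-1 = delta^-1 a; these words represent a^i and d^j for i,j in Z.\<close>
definition pow_a :: "int \<Rightarrow> 'k::field fa" where
  "pow_a i = (if 0 \<le> i then wd (replicate (nat i) A) else wd (concat (replicate (nat (- i)) [Di, D])))"

definition pow_d :: "int \<Rightarrow> 'k::field fa" where
  "pow_d j = (if 0 \<le> j then wd (replicate (nat j) D) else wd (concat (replicate (nat (- j)) [Di, A])))"

definition mon :: "int \<Rightarrow> int \<Rightarrow> 'k::field fa" where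
  "mon i j = fa_mult (pow_a i) (pow_d j)"

text \<open>A left O_nc(B)-comodule structure on W = k^n with standard basis e_0..e_(n-1) is
  given by a matrix X of elements of O_nc(B) (represented modulo J_B) via
  rho(e_j) = \<Sum>_i X i j (x) e_i.  Coassociativity (Delta (x) id) rho = (id (x) rho) rho
  reads Delta(X i j) = \<Sum>_k X k j (x) X i k, and counitality reads eps(X i j) = [i = j].\<close>
definition is_OB_comodule :: "nat \<Rightarrow> (nat \<Rightarrow> nat \<Rightarrow> 'k::field fa) \<Rightarrow> bool" where
  "is_OB_comodule n X \<longleftrightarrow>
     (\<forall>i<n. \<forall>j<n. Delta (X i j) - (\<Sum>k<n. tens (X k j) (X i k)) \<in> tens_ideal J_B) \<and>
     (\<forall>i<n. \<forall>j<n. eps (X i j) = (if i = j then 1 else 0))"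

text \<open>Weight space W_s for the induced O(T)-coaction: w = \<Sum>_j w_j e_j with
  rho_T(w) = s (x) w, i.e. \<Sum>_j w_j X i j = s w_i in O(T) for every i.\<close>
definition in_weight_space :: "nat \<Rightarrow> (nat \<Rightarrow> nat \<Rightarrow> 'k::field fa) \<Rightarrow> 'k fa \<Rightarrow> (nat \<Rightarrow> 'k) \<Rightarrow> bool" where
  "in_weight_space n X s w \<longleftrightarrow>
     (\<forall>i<n. (\<Sum>j<n. fa_smult (w j) (X i j)) - fa_smult (w i) s \<in> J_T)"

definition is_weight :: "nat \<Rightarrow> (nat \<Rightarrow> nat \<Rightarrow> 'k::field fa) \<Rightarrow> 'k fa \<Rightarrow> bool" where
  "is_weight n X s \<longleftrightarrow> (\<exists>w. (\<exists>j<n. w j \<noteq> 0) \<and> in_weight_space n X s w)"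

end

theory Submission
  imports Defs
begin

text \<open>
  Projecting either tensor factor of \<open>Delta w\<close> to \<open>O(T)\<close> kills all but one term, so every word
  has a left and a right bidegree in \<open>\<int>\<^sup>2\<close>, and \<open>J_B\<close> is homogeneous for the left one. For a
  comodule matrix \<open>X\<close>, let \<open>E\<^sub>p\<^sub>q\<close> be the scalar matrix of coefficients of \<open>a\<^sup>p d\<^sup>q\<close> of the images
  of the \<open>X r s\<close> in \<open>O(T)\<close>. Coassociativity makes the \<open>E\<^sub>p\<^sub>q\<close> orthogonal idempotents whose columns lie in
  the weight space of \<open>a\<^sup>p d\<^sup>q\<close>, and the counit makes them sum to the identity. Since \<open>a\<^sup>i d\<^sup>j\<close> is the
  only weight, \<open>E\<^sub>i\<^sub>j = 1\<close>, and coassociativity then says that each \<open>X r s\<close> has left and right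
  bidegree \<open>(i, j)\<close>. A word without \<open>b\<close> whose two bidegrees agree contains no \<open>c\<close>, hence equals a
  monomial in \<open>O_nc(B)\<close>; so \<open>X r s = \<delta>\<^sub>r\<^sub>s a\<^sup>i d\<^sup>j\<close>.
\<close>

abbreviation single :: "'a \<Rightarrow> 'b::zero \<Rightarrow> 'a \<Rightarrow>\<^sub>0 'b" where "single \<equiv> Poly_Mapping.single"
abbreviation lookup :: "('a \<Rightarrow>\<^sub>0 'b::zero) \<Rightarrow> 'a \<Rightarrow> 'b" where "lookup \<equiv> Poly_Mapping.lookup"
abbreviation keys :: "('a \<Rightarrow>\<^sub>0 'b::zero) \<Rightarrow> 'a set" where "keys \<equiv> Poly_Mapping.keys"

definition pm_smult :: "'k::field \<Rightarrow> ('a \<Rightarrow>\<^sub>0 'k) \<Rightarrow> ('a \<Rightarrow>\<^sub>0 'k)" where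
  "pm_smult c f = (\<Sum>u\<in>keys f. single u (c * lookup f u))"

lemma lookup_pm_smult [simp]: "lookup (pm_smult c f) u = c * lookup f u"
proof -
  have "lookup (pm_smult c f) u = (\<Sum>w\<in>keys f. if u = w then c * lookup f w else 0)"
    unfolding pm_smult_def lookup_sum lookup_single when_def by (intro sum.cong) auto
  also have "\<dots> = c * lookup f u"
    by (simp add: sum.delta in_keys_iff)
  finally show ?thesis .
qed

lemma poly_mapping_sum_single: "f = (\<Sum>u\<in>keys f. single u (lookup f u))"
proof (rule poly_mapping_eqI)
  fix u
  have "lookup (\<Sum>u\<in>keys f. single u (lookup f u)) u = (\<Sum>w\<in>keys f. if u = w then lookup f w else 0)"
    unfolding lookup_sum lookup_single when_def by (intro sum.cong) auto
  then show "lookup f u = lookup (\<Sum>u\<in>keys f. single u (lookup f u)) u"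
    by (simp add: sum.delta in_keys_iff)
qed

lemma pm_smult_add_left: "pm_smult (c + d) f = pm_smult c f + pm_smult d f"
  by (rule poly_mapping_eqI) (simp add: lookup_add algebra_simps)
lemma pm_smult_diff_right: "pm_smult c (f - g) = pm_smult c f - pm_smult c g"
  by (rule poly_mapping_eqI) (simp add: lookup_minus algebra_simps)
lemma pm_smult_zero_left [simp]: "pm_smult 0 f = 0"
  by (rule poly_mapping_eqI) simp
lemma pm_smult_zero_right [simp]: "pm_smult c 0 = 0"
  by (rule poly_mapping_eqI) simp
lemma pm_smult_one [simp]: "pm_smult 1 f = f"
  by (rule poly_mapping_eqI) simp
lemma pm_smult_minus_one: "pm_smult (-1) f = - f"
  by (rule poly_mapping_eqI) simp
lemma pm_smult_pm_smult [simp]: "pm_smult c (pm_smult d f) = pm_smult (c * d) f"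
  by (rule poly_mapping_eqI) simp
lemma pm_smult_single [simp]: "pm_smult c (single u d) = single u (c * d)"
  by (rule poly_mapping_eqI) (simp add: lookup_single when_def)
lemma pm_smult_sum_right: "pm_smult c (\<Sum>i\<in>I. f i) = (\<Sum>i\<in>I. pm_smult c (f i))"
  by (rule poly_mapping_eqI) (simp add: lookup_sum sum_distrib_left)
lemma pm_smult_sum_left: "pm_smult (\<Sum>i\<in>I. c i) f = (\<Sum>i\<in>I. pm_smult (c i) f)"
  by (rule poly_mapping_eqI) (simp add: lookup_sum sum_distrib_right)
lemma keys_pm_smult: "keys (pm_smult c f) \<subseteq> keys f"
  by (auto simp: in_keys_iff)

definition lin_ext :: "('a \<Rightarrow> ('b \<Rightarrow>\<^sub>0 'k::field)) \<Rightarrow> ('a \<Rightarrow>\<^sub>0 'k) \<Rightarrow> ('b \<Rightarrow>\<^sub>0 'k)" where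
  "lin_ext \<phi> f = (\<Sum>u\<in>keys f. pm_smult (lookup f u) (\<phi> u))"

definition lin_form :: "('a \<Rightarrow> 'k::field) \<Rightarrow> ('a \<Rightarrow>\<^sub>0 'k) \<Rightarrow> 'k" where
  "lin_form \<phi> f = (\<Sum>u\<in>keys f. lookup f u * \<phi> u)"

lemma lin_ext_superset:
  "finite S \<Longrightarrow> keys f \<subseteq> S \<Longrightarrow> lin_ext \<phi> f = (\<Sum>u\<in>S. pm_smult (lookup f u) (\<phi> u))"
  unfolding lin_ext_def by (rule sum.mono_neutral_left) (auto simp: in_keys_iff)
lemma lin_form_superset:
  "finite S \<Longrightarrow> keys f \<subseteq> S \<Longrightarrow> lin_form \<phi> f = (\<Sum>u\<in>S. lookup f u * \<phi> u)"
  unfolding lin_form_def by (rule sum.mono_neutral_left) (auto simp: in_keys_iff)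

lemma lin_ext_add [simp]: "lin_ext \<phi> (f + g) = lin_ext \<phi> f + lin_ext \<phi> g"
  using keys_add[of f g]
  by (subst (1 2 3) lin_ext_superset[where S = "keys f \<union> keys g"])
     (auto simp: lookup_add pm_smult_add_left sum.distrib)
lemma lin_form_add [simp]: "lin_form \<phi> (f + g) = lin_form \<phi> f + lin_form \<phi> g"
  using keys_add[of f g]
  by (subst (1 2 3) lin_form_superset[where S = "keys f \<union> keys g"])
     (auto simp: lookup_add algebra_simps sum.distrib)
lemma lin_ext_zero [simp]: "lin_ext \<phi> 0 = 0"
  by (simp add: lin_ext_def)
lemma lin_form_zero [simp]: "lin_form \<phi> 0 = 0"
  by (simp add: lin_form_def)
lemma lin_ext_single [simp]: "lin_ext \<phi> (single u c) = pm_smult c (\<phi> u)"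
  by (simp add: lin_ext_def)
lemma lin_form_single [simp]: "lin_form \<phi> (single u c) = c * \<phi> u"
  by (simp add: lin_form_def)
lemma lin_ext_pm_smult [simp]: "lin_ext \<phi> (pm_smult c f) = pm_smult c (lin_ext \<phi> f)"
  by (subst lin_ext_superset[where S = "keys f"]) (auto simp: keys_pm_smult lin_ext_def pm_smult_sum_right)
lemma lin_form_pm_smult [simp]: "lin_form \<phi> (pm_smult c f) = c * lin_form \<phi> f"
  by (subst lin_form_superset[where S = "keys f"])
     (auto simp: keys_pm_smult lin_form_def sum_distrib_left mult.assoc)
lemma lin_ext_uminus [simp]: "lin_ext \<phi> (- f) = - lin_ext \<phi> f"
  using lin_ext_add[of \<phi> f "- f"] by (simp add: eq_neg_iff_add_eq_0 add.commute)
lemma lin_form_uminus [simp]: "lin_form \<phi> (- f) = - lin_form \<phi> f"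
  using lin_form_add[of \<phi> f "- f"] by (simp add: eq_neg_iff_add_eq_0 add.commute)
lemma lin_ext_diff [simp]: "lin_ext \<phi> (f - g) = lin_ext \<phi> f - lin_ext \<phi> g"
  using lin_ext_add[of \<phi> f "- g"] by simp
lemma lin_form_diff [simp]: "lin_form \<phi> (f - g) = lin_form \<phi> f - lin_form \<phi> g"
  using lin_form_add[of \<phi> f "- g"] by simp
lemma lin_ext_sum [simp]: "lin_ext \<phi> (\<Sum>i\<in>I. f i) = (\<Sum>i\<in>I. lin_ext \<phi> (f i))"
  by (induction I rule: infinite_finite_induct) auto
lemma lin_form_sum [simp]: "lin_form \<phi> (\<Sum>i\<in>I. f i) = (\<Sum>i\<in>I. lin_form \<phi> (f i))"
  by (induction I rule: infinite_finite_induct) auto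

lemma lin_ext_cong: "(\<And>u. u \<in> keys f \<Longrightarrow> \<phi> u = \<psi> u) \<Longrightarrow> lin_ext \<phi> f = lin_ext \<psi> f"
  unfolding lin_ext_def by simp
lemma lin_form_cong: "(\<And>u. u \<in> keys f \<Longrightarrow> \<phi> u = \<psi> u) \<Longrightarrow> lin_form \<phi> f = lin_form \<psi> f"
  unfolding lin_form_def by simp

lemma lin_ext_fun_zero [simp]: "lin_ext (\<lambda>u. 0) f = 0"
  unfolding lin_ext_def by simp
lemma lin_ext_fun_diff: "lin_ext (\<lambda>u. \<phi> u - \<psi> u) f = lin_ext \<phi> f - lin_ext \<psi> f"
  unfolding lin_ext_def by (simp add: pm_smult_diff_right sum_subtractf)
lemma lin_ext_fun_pm_smult: "lin_ext (\<lambda>u. pm_smult c (\<phi> u)) f = pm_smult c (lin_ext \<phi> f)"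
  unfolding lin_ext_def by (simp add: pm_smult_sum_right mult.commute)
lemma lin_ext_fun_sum: "lin_ext (\<lambda>u. \<Sum>i\<in>I. \<phi> i u) f = (\<Sum>i\<in>I. lin_ext (\<phi> i) f)"
  unfolding lin_ext_def by (simp add: pm_smult_sum_right sum.swap[of _ I])
lemma lin_form_fun_sum: "lin_form (\<lambda>u. \<Sum>i\<in>I. \<phi> i u) f = (\<Sum>i\<in>I. lin_form (\<phi> i) f)"
  unfolding lin_form_def by (simp add: sum_distrib_left sum.swap[of _ I])
lemma lin_form_fun_mult: "lin_form (\<lambda>u. c * \<phi> u) f = c * lin_form \<phi> f"
  unfolding lin_form_def by (simp add: sum_distrib_left mult.left_commute)

lemma lin_ext_lin_ext: "lin_ext \<psi> (lin_ext \<phi> f) = lin_ext (\<lambda>u. lin_ext \<psi> (\<phi> u)) f"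
  by (simp add: lin_ext_def[of \<phi>]) (simp add: lin_ext_def[of "\<lambda>u. lin_ext \<psi> (\<phi> u)"])
lemma lin_form_lin_ext: "lin_form \<psi> (lin_ext \<phi> f) = lin_form (\<lambda>u. lin_form \<psi> (\<phi> u)) f"
  by (simp add: lin_ext_def[of \<phi>]) (simp add: lin_form_def[of "\<lambda>u. lin_form \<psi> (\<phi> u)"])
lemma lin_ext_single_one: "lin_ext (\<lambda>u. single u 1) f = f"
  unfolding lin_ext_def by (subst (3) poly_mapping_sum_single) simp
lemma lin_ext_single_const: "lin_ext (\<lambda>u. single u c) f = pm_smult c f"
  using lin_ext_fun_pm_smult[of c "\<lambda>u. single u 1" f] by (simp add: lin_ext_single_one)
lemma lin_ext_fun_const: "lin_ext (\<lambda>u. pm_smult (\<phi> u) y) f = pm_smult (lin_form \<phi> f) y"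
  unfolding lin_ext_def lin_form_def by (simp add: pm_smult_sum_left)

lemma wd_eq_single: "wd u = single u 1"
  by (simp add: wd_def)
lemma fa_smult_eq_pm_smult: "fa_smult = pm_smult"
  by (simp add: fun_eq_iff fa_smult_def pm_smult_def)
lemma fa2_smult_eq_pm_smult: "fa2_smult = pm_smult"
  by (simp add: fun_eq_iff fa2_smult_def pm_smult_def)

lemma fa_mult_eq_lin_ext: "fa_mult f g = lin_ext (\<lambda>u. lin_ext (\<lambda>v. wd (u @ v)) g) f"
  unfolding fa_mult_def lin_ext_def wd_eq_single by (simp add: pm_smult_sum_right)
lemma tens_eq_lin_ext: "tens f g = lin_ext (\<lambda>u. lin_ext (\<lambda>v. single (u, v) 1) g) f"
  unfolding tens_def lin_ext_def by (simp add: pm_smult_sum_right)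
lemma fa2_mult_eq_lin_ext:
  "fa2_mult f g = lin_ext (\<lambda>x. lin_ext (\<lambda>y. single (fst x @ fst y, snd x @ snd y) 1) g) f"
  unfolding fa2_mult_def lin_ext_def by (simp add: pm_smult_sum_right)
lemma Delta_eq_lin_ext: "Delta f = lin_ext Delta_word f"
  unfolding Delta_def lin_ext_def fa2_smult_eq_pm_smult ..
lemma eps_eq_lin_form: "eps f = lin_form (\<lambda>u. prod_list (map eps_gen u)) f"
  unfolding eps_def lin_form_def ..

lemma Delta_word_Cons: "Delta_word (g # w) = fa2_mult (Delta_gen g) (Delta_word w)"
  by (simp add: Delta_word_def)

lemma fa_mult_wd: "fa_mult (wd u) (wd v) = wd (u @ v)"
  by (simp add: fa_mult_eq_lin_ext wd_eq_single)
lemma tens_wd: "tens (wd u) (wd v) = single (u, v) 1"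
  by (simp add: tens_eq_lin_ext wd_eq_single)
lemma fa2_mult_single_left:
  "fa2_mult (single (x, y) 1) H = lin_ext (\<lambda>z. single (x @ fst z, y @ snd z) 1) H"
  by (simp add: fa2_mult_eq_lin_ext)
lemma fa2_mult_add_left: "fa2_mult (F + G) H = fa2_mult F H + fa2_mult G H"
  by (simp add: fa2_mult_eq_lin_ext)

lemma lin_ext_if_wd: "lin_ext (\<lambda>v. if P then wd v else 0) y = (if P then y else 0)"
  by (simp add: wd_eq_single lin_ext_single_one)

lemma lin_ext_prepend_if_wd: "lin_ext (\<lambda>v. wd (x @ v)) (if P then wd w else 0) = (if P then wd (x @ w) else 0)"
  by (simp add: wd_eq_single)

lemma fa_mult_smult_wd_wd:
  "fa_mult (fa_smult c (wd u)) (fa_mult x (wd v)) = lin_ext (\<lambda>w. single (u @ w @ v) c) x"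
proof -
  have "fa_mult (single u c) (lin_ext (\<lambda>w. wd (w @ v)) x) = pm_smult c (lin_ext (\<lambda>w. wd (u @ w @ v)) x)"
    by (simp add: fa_mult_eq_lin_ext lin_ext_lin_ext wd_eq_single)
  also have "\<dots> = lin_ext (\<lambda>w. single (u @ w @ v) c) x"
    by (simp add: lin_ext_fun_pm_smult[symmetric] wd_eq_single)
  finally show ?thesis
    by (simp add: fa_mult_eq_lin_ext fa_smult_eq_pm_smult wd_eq_single)
qed

lemma two_sided_ideal_mult_words:
  "x \<in> two_sided_ideal R \<Longrightarrow> lin_ext (\<lambda>w. single (u @ w @ v) c) x \<in> two_sided_ideal R"
  using two_sided_ideal.mult[of x R c u v] by (simp add: fa_mult_smult_wd_wd)

lemma two_sided_ideal_smult: "x \<in> two_sided_ideal R \<Longrightarrow> pm_smult c x \<in> two_sided_ideal R"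
  using two_sided_ideal_mult_words[of x R "[]" "[]" c] by (simp add: lin_ext_single_const)

lemma two_sided_ideal_uminus: "x \<in> two_sided_ideal R \<Longrightarrow> - x \<in> two_sided_ideal R"
  using two_sided_ideal_smult[of x R "-1"] by (simp add: pm_smult_minus_one)

lemma two_sided_ideal_diff:
  "x \<in> two_sided_ideal R \<Longrightarrow> y \<in> two_sided_ideal R \<Longrightarrow> x - y \<in> two_sided_ideal R"
  using two_sided_ideal.add[of x R "- y"] two_sided_ideal_uminus[of y R] by simp

lemma two_sided_ideal_sum:
  "(\<And>i. i \<in> S \<Longrightarrow> f i \<in> two_sided_ideal R) \<Longrightarrow> (\<Sum>i\<in>S. f i) \<in> two_sided_ideal R"
  by (induction S rule: infinite_finite_induct) (auto intro: two_sided_ideal.intros)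

lemma two_sided_ideal_lin_ext:
  "(\<And>u. u \<in> keys x \<Longrightarrow> \<phi> u \<in> two_sided_ideal R) \<Longrightarrow> lin_ext \<phi> x \<in> two_sided_ideal R"
  unfolding lin_ext_def by (intro two_sided_ideal_sum two_sided_ideal_smult) auto

lemma two_sided_ideal_wd_diff_context:
  "wd a - wd b \<in> two_sided_ideal R \<Longrightarrow> wd (u @ a @ v) - wd (u @ b @ v) \<in> two_sided_ideal R"
  using two_sided_ideal_mult_words[of "wd a - wd b" R u v 1] by (simp add: wd_eq_single)

lemma two_sided_ideal_wd_context:
  "wd a \<in> two_sided_ideal R \<Longrightarrow> wd (u @ a @ v) \<in> two_sided_ideal R"
  using two_sided_ideal_mult_words[of "wd a" R u v 1] by (simp add: wd_eq_single)

lemma lin_form_vanishes_on_two_sided_ideal: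
  assumes "x \<in> two_sided_ideal R"
    and "\<And>u v r. r \<in> R \<Longrightarrow> lin_form (\<lambda>w. \<psi> (u @ w @ v)) r = 0"
  shows "lin_form \<psi> x = 0"
  using assms
proof (induction arbitrary: \<psi>)
  case (gen r)
  then show ?case using gen.prems[of r "[]" "[]"] by simp
next
  case (mult x c u v)
  have "lin_form (\<lambda>w. \<psi> (u @ w @ v)) x = 0"
    by (rule mult.IH) (use mult.prems[of _ "u @ _" "_ @ v"] in simp)
  then show ?case
    by (simp add: fa_mult_smult_wd_wd lin_form_lin_ext lin_form_fun_mult)
qed simp_all

definition restrict_words :: "(word \<Rightarrow> bool) \<Rightarrow> 'k::field fa \<Rightarrow> 'k fa" where
  "restrict_words P = lin_ext (\<lambda>w. if P w then wd w else 0)"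

lemma restrict_words_restrict_words:
  "restrict_words P (restrict_words Q x) = restrict_words (\<lambda>w. P w \<and> Q w) x"
  unfolding restrict_words_def lin_ext_lin_ext by (rule lin_ext_cong) (simp add: wd_eq_single)

lemma restrict_words_two_sided_ideal:
  assumes "x \<in> two_sided_ideal R"
    and "\<And>u v r. r \<in> R \<Longrightarrow> restrict_words (\<lambda>w. P (u @ w @ v)) r \<in> two_sided_ideal R"
  shows "restrict_words P x \<in> two_sided_ideal R"
  using assms
proof (induction arbitrary: P)
  case (gen r)
  then show ?case using gen.prems[of r "[]" "[]"] by simp
next
  case zero
  then show ?case by (simp add: restrict_words_def two_sided_ideal.zero)
next
  case (add x y)
  then show ?case by (simp add: restrict_words_def two_sided_ideal.add)
next
  case (mult x c u v)
  have "restrict_words (\<lambda>w. P (u @ w @ v)) x \<in> two_sided_ideal R"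
    by (rule mult.IH) (use mult.prems[of _ "u @ _" "_ @ v"] in simp)
  from two_sided_ideal_mult_words[OF this, of u v c]
  have "lin_ext (\<lambda>w. single (u @ w @ v) c) (restrict_words (\<lambda>w. P (u @ w @ v)) x) \<in> two_sided_ideal R" .
  moreover have "lin_ext (\<lambda>w. single (u @ w @ v) c) (restrict_words (\<lambda>w. P (u @ w @ v)) x)
      = restrict_words P (lin_ext (\<lambda>w. single (u @ w @ v) c) x)"
    unfolding restrict_words_def lin_ext_lin_ext by (rule lin_ext_cong) (simp add: wd_eq_single)
  ultimately show ?case
    by (simp add: fa_mult_smult_wd_wd)
qed

lemma J_B_subset_J_T: "x \<in> J_B \<Longrightarrow> x \<in> J_T"
  unfolding J_B_def J_T_def
  by (induction rule: two_sided_ideal.induct) (auto intro: two_sided_ideal.intros)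

lemma J_B_zero: "0 \<in> J_B"
  unfolding J_B_def by (rule two_sided_ideal.zero)
lemma J_B_lin_ext: "(\<And>u. u \<in> keys x \<Longrightarrow> \<phi> u \<in> J_B) \<Longrightarrow> lin_ext \<phi> x \<in> J_B"
  unfolding J_B_def by (rule two_sided_ideal_lin_ext)
lemma J_T_lin_ext: "(\<And>u. u \<in> keys x \<Longrightarrow> \<phi> u \<in> J_T) \<Longrightarrow> lin_ext \<phi> x \<in> J_T"
  unfolding J_T_def by (rule two_sided_ideal_lin_ext)

lemma J_B_add: "x \<in> J_B \<Longrightarrow> y \<in> J_B \<Longrightarrow> x + y \<in> J_B"
  unfolding J_B_def by (rule two_sided_ideal.add)
lemma J_B_diff: "x \<in> J_B \<Longrightarrow> y \<in> J_B \<Longrightarrow> x - y \<in> J_B"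
  unfolding J_B_def by (rule two_sided_ideal_diff)
lemma J_B_pm_smult: "x \<in> J_B \<Longrightarrow> pm_smult c x \<in> J_B"
  unfolding J_B_def by (rule two_sided_ideal_smult)

lemma rels_GL2_J_B: "r \<in> rels_GL2 \<Longrightarrow> r \<in> J_B"
  unfolding J_B_def by (auto intro: two_sided_ideal.gen)

lemma wd_J_B_if_B: "B \<in> set w \<Longrightarrow> wd w \<in> J_B"
proof -
  assume "B \<in> set w"
  then obtain u v where "w = u @ [B] @ v" by (metis append_Cons append_Nil split_list)
  moreover have "wd [B] \<in> J_B" unfolding J_B_def by (auto intro: two_sided_ideal.gen)
  ultimately show ?thesis unfolding J_B_def using two_sided_ideal_wd_context by blast
qed

lemma wd_J_T_if_C: "C \<in> set w \<Longrightarrow> wd w \<in> J_T"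
proof -
  assume "C \<in> set w"
  then obtain u v where "w = u @ [C] @ v" by (metis append_Cons append_Nil split_list)
  moreover have "wd [C] \<in> J_T" unfolding J_T_def by (auto intro: two_sided_ideal.gen)
  ultimately show ?thesis unfolding J_T_def using two_sided_ideal_wd_context by blast
qed

section \<open>Bidegrees of words\<close>

text \<open>In \<open>Delta (wd w)\<close> exactly one tensor term has a left factor free of \<open>b, c\<close>, namely
  \<open>a\<^sup>p d\<^sup>q \<otimes> w\<close> up to the relations of O(T), with \<open>(p, q) = (left_deg_a w, left_deg_d w)\<close>;
  symmetrically, the unique term with a right factor free of \<open>b, c\<close> is
  \<open>w \<otimes> a\<^sup>p d\<^sup>q\<close> with \<open>(p, q) = (right_deg_a w, right_deg_d w)\<close>.\<close>

fun left_a :: "gen \<Rightarrow> int" where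
  "left_a A = 1" | "left_a B = 1" | "left_a C = 0" | "left_a D = 0" | "left_a Dl = 1" | "left_a Di = -1"
fun left_d :: "gen \<Rightarrow> int" where
  "left_d A = 0" | "left_d B = 0" | "left_d C = 1" | "left_d D = 1" | "left_d Dl = 1" | "left_d Di = -1"
fun right_a :: "gen \<Rightarrow> int" where
  "right_a A = 1" | "right_a B = 0" | "right_a C = 1" | "right_a D = 0" | "right_a Dl = 1" | "right_a Di = -1"
fun right_d :: "gen \<Rightarrow> int" where
  "right_d A = 0" | "right_d B = 1" | "right_d C = 0" | "right_d D = 1" | "right_d Dl = 1" | "right_d Di = -1"

definition left_deg_a :: "word \<Rightarrow> int" where "left_deg_a w = sum_list (map left_a w)"
definition left_deg_d :: "word \<Rightarrow> int" where "left_deg_d w = sum_list (map left_d w)"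
definition right_deg_a :: "word \<Rightarrow> int" where "right_deg_a w = sum_list (map right_a w)"
definition right_deg_d :: "word \<Rightarrow> int" where "right_deg_d w = sum_list (map right_d w)"

definition bc_free :: "word \<Rightarrow> bool" where
  "bc_free w \<longleftrightarrow> B \<notin> set w \<and> C \<notin> set w"

lemma deg_simps [simp]:
  "left_deg_a [] = 0" "left_deg_d [] = 0" "right_deg_a [] = 0" "right_deg_d [] = 0"
  "left_deg_a (g # w) = left_a g + left_deg_a w" "left_deg_d (g # w) = left_d g + left_deg_d w"
  "right_deg_a (g # w) = right_a g + right_deg_a w" "right_deg_d (g # w) = right_d g + right_deg_d w"
  "left_deg_a (u @ w) = left_deg_a u + left_deg_a w" "left_deg_d (u @ w) = left_deg_d u + left_deg_d w"
  "right_deg_a (u @ w) = right_deg_a u + right_deg_a w" "right_deg_d (u @ w) = right_deg_d u + right_deg_d w"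
  by (simp_all add: left_deg_a_def left_deg_d_def right_deg_a_def right_deg_d_def)

lemma bc_free_simps [simp]:
  "bc_free []" "bc_free (g # w) \<longleftrightarrow> g \<noteq> B \<and> g \<noteq> C \<and> bc_free w"
  "bc_free (u @ w) \<longleftrightarrow> bc_free u \<and> bc_free w"
  by (auto simp: bc_free_def)

lemma bc_free_right_deg: "bc_free u \<Longrightarrow> right_deg_a u = left_deg_a u \<and> right_deg_d u = left_deg_d u"
proof (induction u)
  case (Cons g u) then show ?case by (cases g) auto
qed simp

lemma left_deg_a_le_right_deg_a: "B \<notin> set u \<Longrightarrow> left_deg_a u \<le> right_deg_a u"
proof (induction u)
  case (Cons g u) then show ?case by (cases g) auto
qed simp

lemma left_deg_a_less_right_deg_a: "B \<notin> set u \<Longrightarrow> C \<in> set u \<Longrightarrow> left_deg_a u < right_deg_a u"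
proof (induction u)
  case (Cons g u) then show ?case using left_deg_a_le_right_deg_a[of u] by (cases g) auto
qed simp

section \<open>Normal forms of \<open>b, c\<close>-free words modulo \<open>J_B\<close>\<close>

definition eq_J_B :: "'k::field itself \<Rightarrow> word \<Rightarrow> word \<Rightarrow> bool" where
  "eq_J_B K u v \<longleftrightarrow> (wd u - wd v :: 'k fa) \<in> J_B"

lemma eq_J_B_refl: "eq_J_B K u u"
  unfolding eq_J_B_def J_B_def by (simp add: two_sided_ideal.zero)
lemma eq_J_B_sym: "eq_J_B K u v \<Longrightarrow> eq_J_B K v u"
  unfolding eq_J_B_def J_B_def using two_sided_ideal_uminus by fastforce
lemma eq_J_B_trans [trans]: "eq_J_B K u v \<Longrightarrow> eq_J_B K v w \<Longrightarrow> eq_J_B K u w"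
  unfolding eq_J_B_def J_B_def using two_sided_ideal.add by fastforce
lemma eq_J_B_context: "eq_J_B K a b \<Longrightarrow> x = u @ a @ v \<Longrightarrow> y = u @ b @ v \<Longrightarrow> eq_J_B K x y"
  unfolding eq_J_B_def J_B_def using two_sided_ideal_wd_diff_context by blast

lemma eq_J_B_drop_B_word:
  fixes K :: "'k::field itself"
  assumes "(wd u - wd w - wd v :: 'k fa) \<in> J_B" and "B \<in> set w"
  shows "eq_J_B K u v"
proof -
  have "(wd u - wd w - wd v) + wd w \<in> (J_B :: 'k fa set)"
    using assms wd_J_B_if_B unfolding J_B_def by (blast intro: two_sided_ideal.add)
  then show ?thesis unfolding eq_J_B_def by (simp add: algebra_simps)
qed

lemma eq_J_B_AD_Dl: "eq_J_B K [A, D] [Dl]"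
  by (rule eq_J_B_drop_B_word[of _ "[C, B]"]) (auto simp: rels_GL2_def intro: rels_GL2_J_B)
lemma eq_J_B_DA_Dl: "eq_J_B K [D, A] [Dl]"
  by (rule eq_J_B_drop_B_word[of _ "[B, C]"]) (auto simp: rels_GL2_def intro: rels_GL2_J_B)
lemma eq_J_B_Di_Dl: "eq_J_B K [Di, Dl] []"
  unfolding eq_J_B_def by (rule rels_GL2_J_B) (simp add: rels_GL2_def)
lemma eq_J_B_A_Di_D: "eq_J_B K [A, Di, D] []"
  by (rule eq_J_B_drop_B_word[of _ "[B, Di, C]"]) (auto simp: rels_GL2_def intro: rels_GL2_J_B)
lemma eq_J_B_D_Di_A: "eq_J_B K [D, Di, A] []"
  by (rule eq_J_B_drop_B_word[of _ "[C, Di, B]"]) (auto simp: rels_GL2_def intro: rels_GL2_J_B)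

lemma eq_J_B_AD_DA: "eq_J_B K [A, D] [D, A]"
  using eq_J_B_AD_Dl eq_J_B_DA_Dl eq_J_B_sym eq_J_B_trans by blast

lemma eq_J_B_Di_D_A: "eq_J_B K [Di, D, A] []"
proof -
  have "eq_J_B K [Di, D, A] [Di, Dl]"
    by (rule eq_J_B_context[OF eq_J_B_DA_Dl, where u = "[Di]" and v = "[]"]) auto
  also have "eq_J_B K \<dots> []" by (rule eq_J_B_Di_Dl)
  finally show ?thesis .
qed

lemma eq_J_B_Di_A_D: "eq_J_B K [Di, A, D] []"
proof -
  have "eq_J_B K [Di, A, D] [Di, Dl]"
    by (rule eq_J_B_context[OF eq_J_B_AD_Dl, where u = "[Di]" and v = "[]"]) auto
  also have "eq_J_B K \<dots> []" by (rule eq_J_B_Di_Dl)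
  finally show ?thesis .
qed

text \<open>With \<open>a\<^sup>-\<^sup>1 = \<delta>\<^sup>-\<^sup>1 d\<close> and \<open>d\<^sup>-\<^sup>1 = \<delta>\<^sup>-\<^sup>1 a\<close>, the next three say that \<open>d\<close> commutes with
  \<open>a\<^sup>-\<^sup>1\<close>, and \<open>d\<^sup>-\<^sup>1\<close> with \<open>a\<close> and with \<open>a\<^sup>-\<^sup>1\<close>.\<close>

lemma eq_J_B_D_Di_D: "eq_J_B K [D, Di, D] [Di, D, D]"
proof -
  have "eq_J_B K [D, Di, D] [Di, D, A, D, Di, D]"
    by (rule eq_J_B_context[OF eq_J_B_sym[OF eq_J_B_Di_D_A], where u = "[]" and v = "[D, Di, D]"]) auto
  also have "eq_J_B K \<dots> [Di, D, D, A, Di, D]"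
    by (rule eq_J_B_context[OF eq_J_B_AD_DA, where u = "[Di, D]" and v = "[Di, D]"]) auto
  also have "eq_J_B K \<dots> [Di, D, D]"
    by (rule eq_J_B_context[OF eq_J_B_A_Di_D, where u = "[Di, D, D]" and v = "[]"]) auto
  finally show ?thesis .
qed

lemma eq_J_B_Di_A_A: "eq_J_B K [Di, A, A] [A, Di, A]"
proof -
  have "eq_J_B K [A, Di, A] [Di, A, D, A, Di, A]"
    by (rule eq_J_B_context[OF eq_J_B_sym[OF eq_J_B_Di_A_D], where u = "[]" and v = "[A, Di, A]"]) auto
  also have "eq_J_B K \<dots> [Di, A, A, D, Di, A]"
    by (rule eq_J_B_context[OF eq_J_B_sym[OF eq_J_B_AD_DA], where u = "[Di, A]" and v = "[Di, A]"]) auto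
  also have "eq_J_B K \<dots> [Di, A, A]"
    by (rule eq_J_B_context[OF eq_J_B_D_Di_A, where u = "[Di, A, A]" and v = "[]"]) auto
  finally show ?thesis by (rule eq_J_B_sym)
qed

lemma eq_J_B_Di_A_Di_D: "eq_J_B K [Di, A, Di, D] [Di, D, Di, A]"
proof -
  have "eq_J_B K [Di, A, Di, D] [Di, D, A, Di, A, Di, D]"
    by (rule eq_J_B_context[OF eq_J_B_sym[OF eq_J_B_Di_D_A], where u = "[]" and v = "[Di, A, Di, D]"]) auto
  also have "eq_J_B K \<dots> [Di, D, Di, A, A, Di, D]"
    by (rule eq_J_B_context[OF eq_J_B_sym[OF eq_J_B_Di_A_A], where u = "[Di, D]" and v = "[Di, D]"]) auto
  also have "eq_J_B K \<dots> [Di, D, Di, A]"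
    by (rule eq_J_B_context[OF eq_J_B_A_Di_D, where u = "[Di, D, Di, A]" and v = "[]"]) auto
  finally show ?thesis .
qed

definition pow_a_word :: "int \<Rightarrow> word" where
  "pow_a_word p = (if 0 \<le> p then replicate (nat p) A else concat (replicate (nat (- p)) [Di, D]))"
definition pow_d_word :: "int \<Rightarrow> word" where
  "pow_d_word q = (if 0 \<le> q then replicate (nat q) D else concat (replicate (nat (- q)) [Di, A]))"
definition mon_word :: "int \<Rightarrow> int \<Rightarrow> word" where
  "mon_word p q = pow_a_word p @ pow_d_word q"

lemma mon_eq_wd_mon_word: "mon p q = wd (mon_word p q)"
  unfolding mon_def pow_a_def pow_d_def mon_word_def pow_a_word_def pow_d_word_def
  by (simp add: fa_mult_wd)

lemma pow_a_word_succ: "0 \<le> p \<Longrightarrow> pow_a_word (p + 1) = A # pow_a_word p"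
  unfolding pow_a_word_def by (simp add: nat_add_distrib)
lemma pow_a_word_neg: "p < 0 \<Longrightarrow> pow_a_word p = Di # D # pow_a_word (p + 1)"
proof -
  assume "p < 0"
  then have "nat (- p) = Suc (nat (- (p + 1)))" by simp
  with \<open>p < 0\<close> show ?thesis unfolding pow_a_word_def by auto
qed
lemma pow_d_word_succ: "0 \<le> q \<Longrightarrow> pow_d_word (q + 1) = D # pow_d_word q"
  unfolding pow_d_word_def by (simp add: nat_add_distrib)
lemma pow_d_word_neg: "q < 0 \<Longrightarrow> pow_d_word q = Di # A # pow_d_word (q + 1)"
proof -
  assume "q < 0"
  then have "nat (- q) = Suc (nat (- (q + 1)))" by simp
  with \<open>q < 0\<close> show ?thesis unfolding pow_d_word_def by auto
qed

lemma eq_J_B_D_pow_a_word: "eq_J_B K (D # pow_a_word p) (pow_a_word p @ [D])"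
proof -
  have pos: "eq_J_B K (D # replicate n A) (replicate n A @ [D])" for n
  proof (induction n)
    case (Suc n)
    have "eq_J_B K (D # replicate (Suc n) A) (A # D # replicate n A)"
      by (rule eq_J_B_context[OF eq_J_B_sym[OF eq_J_B_AD_DA], where u = "[]" and v = "replicate n A"]) auto
    also have "eq_J_B K \<dots> (A # (replicate n A @ [D]))"
      by (rule eq_J_B_context[OF Suc.IH, where u = "[A]" and v = "[]"]) auto
    finally show ?case by simp
  qed (simp add: eq_J_B_refl)
  have neg: "eq_J_B K (D # concat (replicate n [Di, D])) (concat (replicate n [Di, D]) @ [D])" for n
  proof (induction n)
    case (Suc n)
    have "eq_J_B K (D # concat (replicate (Suc n) [Di, D])) (Di # D # D # concat (replicate n [Di, D]))"
      by (rule eq_J_B_context[OF eq_J_B_D_Di_D, where u = "[]" and v = "concat (replicate n [Di, D])"]) auto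
    also have "eq_J_B K \<dots> (Di # D # (concat (replicate n [Di, D]) @ [D]))"
      by (rule eq_J_B_context[OF Suc.IH, where u = "[Di, D]" and v = "[]"]) auto
    finally show ?case by simp
  qed (simp add: eq_J_B_refl)
  show ?thesis unfolding pow_a_word_def using pos neg by auto
qed

lemma eq_J_B_Di_A_pow_a_word: "eq_J_B K (Di # A # pow_a_word p) (pow_a_word p @ [Di, A])"
proof -
  have pos: "eq_J_B K (Di # A # replicate n A) (replicate n A @ [Di, A])" for n
  proof (induction n)
    case (Suc n)
    have "eq_J_B K (Di # A # replicate (Suc n) A) (A # Di # A # replicate n A)"
      by (rule eq_J_B_context[OF eq_J_B_Di_A_A, where u = "[]" and v = "replicate n A"]) auto
    also have "eq_J_B K \<dots> (A # (replicate n A @ [Di, A]))"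
      by (rule eq_J_B_context[OF Suc.IH, where u = "[A]" and v = "[]"]) auto
    finally show ?case by simp
  qed (simp add: eq_J_B_refl)
  have neg: "eq_J_B K (Di # A # concat (replicate n [Di, D])) (concat (replicate n [Di, D]) @ [Di, A])" for n
  proof (induction n)
    case (Suc n)
    have "eq_J_B K (Di # A # concat (replicate (Suc n) [Di, D])) (Di # D # Di # A # concat (replicate n [Di, D]))"
      by (rule eq_J_B_context[OF eq_J_B_Di_A_Di_D, where u = "[]" and v = "concat (replicate n [Di, D])"]) auto
    also have "eq_J_B K \<dots> (Di # D # (concat (replicate n [Di, D]) @ [Di, A]))"
      by (rule eq_J_B_context[OF Suc.IH, where u = "[Di, D]" and v = "[]"]) auto
    finally show ?case by simp
  qed (simp add: eq_J_B_refl)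
  show ?thesis unfolding pow_a_word_def using pos neg by auto
qed

lemma eq_J_B_A_mon_word: "eq_J_B K (A # mon_word p q) (mon_word (p + 1) q)"
proof (cases "0 \<le> p")
  case True
  then show ?thesis by (simp add: mon_word_def pow_a_word_succ eq_J_B_refl)
next
  case False
  then have "pow_a_word p = Di # D # pow_a_word (p + 1)" by (simp add: pow_a_word_neg)
  then show ?thesis unfolding mon_word_def
    by (intro eq_J_B_context[OF eq_J_B_A_Di_D, where u = "[]" and v = "pow_a_word (p + 1) @ pow_d_word q"]) auto
qed

lemma eq_J_B_Di_D_mon_word: "eq_J_B K (Di # D # mon_word p q) (mon_word (p - 1) q)"
proof (cases "p \<le> 0")
  case True
  then have "pow_a_word (p - 1) = Di # D # pow_a_word p" using pow_a_word_neg[of "p - 1"] by simp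
  then show ?thesis by (simp add: mon_word_def eq_J_B_refl)
next
  case False
  then have "pow_a_word p = A # pow_a_word (p - 1)" using pow_a_word_succ[of "p - 1"] by simp
  then show ?thesis unfolding mon_word_def
    by (intro eq_J_B_context[OF eq_J_B_Di_D_A, where u = "[]" and v = "pow_a_word (p - 1) @ pow_d_word q"]) auto
qed

lemma eq_J_B_D_mon_word: "eq_J_B K (D # mon_word p q) (mon_word p (q + 1))"
proof -
  have "eq_J_B K (D # mon_word p q) (pow_a_word p @ D # pow_d_word q)"
    unfolding mon_word_def by (rule eq_J_B_context[OF eq_J_B_D_pow_a_word, where u = "[]" and v = "pow_d_word q"]) auto
  also have "eq_J_B K \<dots> (mon_word p (q + 1))"
  proof (cases "0 \<le> q")
    case True
    then show ?thesis by (simp add: mon_word_def pow_d_word_succ eq_J_B_refl)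
  next
    case False
    then have "pow_d_word q = Di # A # pow_d_word (q + 1)" by (simp add: pow_d_word_neg)
    then show ?thesis unfolding mon_word_def
      by (intro eq_J_B_context[OF eq_J_B_D_Di_A, where u = "pow_a_word p" and v = "pow_d_word (q + 1)"]) auto
  qed
  finally show ?thesis .
qed

lemma eq_J_B_Di_A_mon_word: "eq_J_B K (Di # A # mon_word p q) (mon_word p (q - 1))"
proof -
  have "eq_J_B K (Di # A # mon_word p q) (pow_a_word p @ Di # A # pow_d_word q)"
    unfolding mon_word_def
    by (rule eq_J_B_context[OF eq_J_B_Di_A_pow_a_word, where u = "[]" and v = "pow_d_word q"]) auto
  also have "eq_J_B K \<dots> (mon_word p (q - 1))"
  proof (cases "q \<le> 0")
    case True
    then have "pow_d_word (q - 1) = Di # A # pow_d_word q" using pow_d_word_neg[of "q - 1"] by simp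
    then show ?thesis by (simp add: mon_word_def eq_J_B_refl)
  next
    case False
    then have "pow_d_word q = D # pow_d_word (q - 1)" using pow_d_word_succ[of "q - 1"] by simp
    then show ?thesis unfolding mon_word_def
      by (intro eq_J_B_context[OF eq_J_B_Di_A_D, where u = "pow_a_word p" and v = "pow_d_word (q - 1)"]) auto
  qed
  finally show ?thesis .
qed

lemma eq_J_B_Dl_mon_word: "eq_J_B K (Dl # mon_word p q) (mon_word (p + 1) (q + 1))"
proof -
  have "eq_J_B K (Dl # mon_word p q) (A # D # mon_word p q)"
    by (rule eq_J_B_context[OF eq_J_B_sym[OF eq_J_B_AD_Dl], where u = "[]" and v = "mon_word p q"]) auto
  also have "eq_J_B K \<dots> (A # mon_word p (q + 1))"
    by (rule eq_J_B_context[OF eq_J_B_D_mon_word, where u = "[A]" and v = "[]"]) auto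
  also have "eq_J_B K \<dots> (mon_word (p + 1) (q + 1))"
    by (rule eq_J_B_A_mon_word)
  finally show ?thesis .
qed

lemma eq_J_B_Di_mon_word: "eq_J_B K (Di # mon_word p q) (mon_word (p - 1) (q - 1))"
proof -
  have "eq_J_B K (Di # mon_word p q) (Di # D # Di # A # mon_word p q)"
    by (rule eq_J_B_context[OF eq_J_B_sym[OF eq_J_B_D_Di_A], where u = "[Di]" and v = "mon_word p q"]) auto
  also have "eq_J_B K \<dots> (Di # D # mon_word p (q - 1))"
    by (rule eq_J_B_context[OF eq_J_B_Di_A_mon_word, where u = "[Di, D]" and v = "[]"]) auto
  also have "eq_J_B K \<dots> (mon_word (p - 1) (q - 1))"
    by (rule eq_J_B_Di_D_mon_word)
  finally show ?thesis .
qed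

lemma eq_J_B_bc_free_mon_word:
  "bc_free w \<Longrightarrow> eq_J_B K w (mon_word (left_deg_a w) (left_deg_d w))"
proof (induction w)
  case Nil
  show ?case by (simp add: mon_word_def pow_a_word_def pow_d_word_def eq_J_B_refl)
next
  case (Cons g w)
  then have w: "bc_free w" and g: "g \<noteq> B" "g \<noteq> C" by auto
  have "eq_J_B K (g # w) (g # mon_word (left_deg_a w) (left_deg_d w))"
    by (rule eq_J_B_context[OF Cons.IH[OF w], where u = "[g]" and v = "[]"]) auto
  moreover have "eq_J_B K (g # mon_word (left_deg_a w) (left_deg_d w))
      (mon_word (left_deg_a (g # w)) (left_deg_d (g # w)))"
    using g eq_J_B_A_mon_word[of K "left_deg_a w" "left_deg_d w"]
      eq_J_B_D_mon_word[of K "left_deg_a w" "left_deg_d w"]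
      eq_J_B_Dl_mon_word[of K "left_deg_a w" "left_deg_d w"]
      eq_J_B_Di_mon_word[of K "left_deg_a w" "left_deg_d w"]
    by (cases g) (simp_all add: add.commute)
  ultimately show ?case by (rule eq_J_B_trans)
qed

lemma bc_free_wd_eq_mon:
  "bc_free w \<Longrightarrow> (wd w - mon (left_deg_a w) (left_deg_d w) :: 'k::field fa) \<in> J_B"
  using eq_J_B_bc_free_mon_word[of w "TYPE('k)"] unfolding eq_J_B_def by (simp add: mon_eq_wd_mon_word)

text \<open>The coefficient of \<open>a\<^sup>p d\<^sup>q\<close> in the image of \<open>x\<close> in \<open>O(T) = k[a\<^sup>\<plusminus>\<^sup>1, d\<^sup>\<plusminus>\<^sup>1]\<close>.\<close>
definition torus_coeff :: "int \<Rightarrow> int \<Rightarrow> 'k::field fa \<Rightarrow> 'k" where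
  "torus_coeff p q = lin_form (\<lambda>w. if bc_free w \<and> left_deg_a w = p \<and> left_deg_d w = q then 1 else 0)"

lemma torus_coeff_J_T: "x \<in> J_T \<Longrightarrow> torus_coeff p q x = 0"
  unfolding torus_coeff_def J_T_def
  by (rule lin_form_vanishes_on_two_sided_ideal) (auto simp: rels_GL2_def wd_eq_single)

lemma torus_coeff_J_B: "x \<in> J_B \<Longrightarrow> torus_coeff p q x = 0"
  using torus_coeff_J_T J_B_subset_J_T by blast

lemma torus_coeff_diff [simp]: "torus_coeff p q (x - y) = torus_coeff p q x - torus_coeff p q y"
  by (simp add: torus_coeff_def)
lemma torus_coeff_sum [simp]: "torus_coeff p q (\<Sum>k\<in>S. f k) = (\<Sum>k\<in>S. torus_coeff p q (f k))"
  by (simp add: torus_coeff_def)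
lemma torus_coeff_pm_smult [simp]: "torus_coeff p q (pm_smult c x) = c * torus_coeff p q x"
  by (simp add: torus_coeff_def)

definition left_part :: "int \<Rightarrow> int \<Rightarrow> 'k::field fa \<Rightarrow> 'k fa" where
  "left_part p q = restrict_words (\<lambda>w. left_deg_a w = p \<and> left_deg_d w = q)"
definition right_part :: "int \<Rightarrow> int \<Rightarrow> 'k::field fa \<Rightarrow> 'k fa" where
  "right_part p q = restrict_words (\<lambda>w. right_deg_a w = p \<and> right_deg_d w = q)"

lemma left_part_J_B: "x \<in> J_B \<Longrightarrow> left_part p q x \<in> J_B"
  unfolding left_part_def J_B_def
  by (rule restrict_words_two_sided_ideal)
     (auto simp: rels_GL2_def restrict_words_def wd_eq_single intro: two_sided_ideal.intros)

lemma torus_coeff_left_part: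
  "torus_coeff p' q' (left_part p q x) = (if p' = p \<and> q' = q then torus_coeff p q x else 0)"
proof (cases "p' = p \<and> q' = q")
  case True
  then show ?thesis
    unfolding torus_coeff_def left_part_def restrict_words_def lin_form_lin_ext
    by (auto simp: wd_eq_single intro: lin_form_cong)
next
  case False
  have "torus_coeff p' q' (left_part p q x) = lin_form (\<lambda>u. 0) x"
    unfolding torus_coeff_def left_part_def restrict_words_def lin_form_lin_ext
    by (intro lin_form_cong) (use False in \<open>auto simp: wd_eq_single\<close>)
  then show ?thesis by (subst if_not_P[OF False]) (simp add: lin_form_def)
qed

lemma left_deg_replicate [simp]:
  "left_deg_a (replicate n g) = int n * left_a g" "left_deg_d (replicate n g) = int n * left_d g"
  by (induction n) (auto simp: algebra_simps)
lemma left_deg_concat_replicate [simp]: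
  "left_deg_a (concat (replicate n w)) = int n * left_deg_a w"
  "left_deg_d (concat (replicate n w)) = int n * left_deg_d w"
  by (induction n) (auto simp: algebra_simps)
lemma bc_free_replicate:
  "bc_free w \<Longrightarrow> bc_free (concat (replicate n w))" "g \<noteq> B \<Longrightarrow> g \<noteq> C \<Longrightarrow> bc_free (replicate n g)"
  by (induction n) auto

lemma left_deg_pow_a_word: "left_deg_a (pow_a_word p) = p" "left_deg_d (pow_a_word p) = 0" "bc_free (pow_a_word p)"
  unfolding pow_a_word_def by (auto intro: bc_free_replicate)
lemma left_deg_pow_d_word: "left_deg_a (pow_d_word q) = 0" "left_deg_d (pow_d_word q) = q" "bc_free (pow_d_word q)"
  unfolding pow_d_word_def by (auto intro: bc_free_replicate)

lemma torus_coeff_mon: "torus_coeff p q (mon p' q') = (if p = p' \<and> q = q' then 1 else 0)"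
  by (simp add: torus_coeff_def mon_eq_wd_mon_word mon_word_def wd_eq_single left_deg_pow_a_word left_deg_pow_d_word)

lemma mon_diff_J_T_imp_eq:
  assumes "(mon p q - mon i j :: 'k::field fa) \<in> J_T"
  shows "p = i \<and> q = j"
proof -
  from torus_coeff_J_T[OF assms, of p q] have "(if p = i \<and> q = j then 1 else 0) = (1::'k)"
    by (simp add: torus_coeff_mon)
  then show ?thesis by (simp split: if_splits)
qed

definition left_support :: "'k::field fa \<Rightarrow> (int \<times> int) set" where
  "left_support x = (\<lambda>u. (left_deg_a u, left_deg_d u)) ` keys x"

lemma finite_left_support: "finite (left_support x)"
  by (simp add: left_support_def)

lemma sum_indicator_left_deg:
  assumes "finite G" and "(left_deg_a u, left_deg_d u) \<in> G"
  shows "(\<Sum>g\<in>G. if bc_free u \<and> left_deg_a u = fst g \<and> left_deg_d u = snd g then f g else 0)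
    = (if bc_free u then f (left_deg_a u, left_deg_d u) else 0)"
proof -
  have "(\<Sum>g\<in>G. if bc_free u \<and> left_deg_a u = fst g \<and> left_deg_d u = snd g then f g else 0)
      = (\<Sum>g\<in>G. if (left_deg_a u, left_deg_d u) = g then (if bc_free u then f g else 0) else 0)"
    by (intro sum.cong) auto
  also have "\<dots> = (if bc_free u then f (left_deg_a u, left_deg_d u) else 0)"
    using assms by (subst sum.delta') auto
  finally show ?thesis .
qed

lemma torus_expansion:
  fixes x :: "'k::field fa"
  assumes "finite G" and "left_support x \<subseteq> G"
  shows "x - (\<Sum>g\<in>G. pm_smult (torus_coeff (fst g) (snd g) x) (mon (fst g) (snd g))) \<in> J_T"
proof -
  have "x - (\<Sum>g\<in>G. pm_smult (torus_coeff (fst g) (snd g) x) (mon (fst g) (snd g)))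
     = lin_ext (\<lambda>u. wd u - (\<Sum>g\<in>G. pm_smult (if bc_free u \<and> left_deg_a u = fst g \<and> left_deg_d u = snd g
         then 1 else 0) (mon (fst g) (snd g)))) x"
    unfolding torus_coeff_def
    by (simp add: lin_ext_fun_sum lin_ext_fun_const lin_ext_fun_diff lin_ext_single_one wd_eq_single)
  also have "\<dots> \<in> J_T"
  proof (rule J_T_lin_ext, goal_cases)
    case (1 u)
    then have "(left_deg_a u, left_deg_d u) \<in> G" using assms(2) unfolding left_support_def by auto
    with assms(1) have sum_eq: "(\<Sum>g\<in>G. pm_smult (if bc_free u \<and> left_deg_a u = fst g \<and> left_deg_d u = snd g
         then 1 else 0) (mon (fst g) (snd g) :: 'k fa)) = (if bc_free u then mon (left_deg_a u) (left_deg_d u) else 0)"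
      using sum_indicator_left_deg[where f = "\<lambda>g. mon (fst g) (snd g) :: 'k fa"]
      by (simp add: if_distrib[of "\<lambda>c. pm_smult c _"] cong: if_cong)
    have "wd u - (if bc_free u then mon (left_deg_a u) (left_deg_d u) else 0) \<in> (J_T :: 'k fa set)"
    proof (cases "bc_free u")
      case True
      then show ?thesis using bc_free_wd_eq_mon J_B_subset_J_T by auto
    next
      case False
      then have "wd u \<in> (J_T :: 'k fa set)"
        using wd_J_T_if_C wd_J_B_if_B J_B_subset_J_T unfolding bc_free_def by blast
      then show ?thesis using False by auto
    qed
    then show ?case by (simp only: sum_eq)
  qed
  finally show ?thesis .
qed

lemma prod_eps_gen: "prod_list (map eps_gen u) = (if bc_free u then (1::'k::field) else 0)"
proof (induction u)
  case (Cons g u) then show ?case by (cases g) auto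
qed simp

text \<open>The counit factors through \<open>O(T)\<close>, where it maps every monomial to \<open>1\<close>.\<close>
lemma eps_eq_sum_torus_coeff:
  fixes x :: "'k::field fa"
  assumes "finite G" and "left_support x \<subseteq> G"
  shows "eps x = (\<Sum>g\<in>G. torus_coeff (fst g) (snd g) x)"
proof -
  have "(\<Sum>g\<in>G. torus_coeff (fst g) (snd g) x)
      = lin_form (\<lambda>u. \<Sum>g\<in>G. if bc_free u \<and> left_deg_a u = fst g \<and> left_deg_d u = snd g then 1 else 0) x"
    unfolding torus_coeff_def by (simp add: lin_form_fun_sum)
  also have "\<dots> = lin_form (\<lambda>u. prod_list (map eps_gen u)) x"
  proof (rule lin_form_cong)
    fix u assume "u \<in> keys x"
    then have "(left_deg_a u, left_deg_d u) \<in> G" using assms(2) unfolding left_support_def by auto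
    with assms(1) show "(\<Sum>g\<in>G. if bc_free u \<and> left_deg_a u = fst g \<and> left_deg_d u = snd g then 1 else 0)
        = (prod_list (map eps_gen u) :: 'k)"
      using sum_indicator_left_deg[where f = "\<lambda>_. 1 :: 'k"] by (simp add: prod_eps_gen)
  qed
  finally show ?thesis by (simp add: eps_eq_lin_form)
qed

text \<open>A word without \<open>b\<close> whose left and right degrees agree contains no \<open>c\<close> either, since every
  \<open>c\<close> raises the right \<open>a\<close>-degree above the left one; so it is congruent to a monomial.\<close>
lemma left_part_right_part_eq_mon:
  fixes x :: "'k::field fa"
  shows "left_part p q (right_part p q x) - pm_smult (torus_coeff p q x) (mon p q) \<in> J_B"
proof -
  have "left_part p q (right_part p q x) - pm_smult (torus_coeff p q x) (mon p q) =
     lin_ext (\<lambda>u. (if right_deg_a u = p \<and> right_deg_d u = q \<and> left_deg_a u = p \<and> left_deg_d u = q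
         then wd u else 0) -
       pm_smult (if bc_free u \<and> left_deg_a u = p \<and> left_deg_d u = q then 1 else 0) (mon p q)) x"
    unfolding left_part_def right_part_def restrict_words_restrict_words torus_coeff_def
    by (simp add: restrict_words_def lin_ext_fun_diff lin_ext_fun_const conj_ac)
  also have "\<dots> \<in> J_B"
  proof (rule J_B_lin_ext, goal_cases)
    case (1 u)
    show ?case
    proof (cases "bc_free u")
      case True
      then show ?thesis using bc_free_right_deg bc_free_wd_eq_mon[OF True] by (auto intro: J_B_zero)
    next
      case False
      then have "B \<in> set u" if "left_deg_a u = right_deg_a u"
        using that left_deg_a_less_right_deg_a[of u] unfolding bc_free_def by force
      with False show ?thesis using wd_J_B_if_B by (auto intro: J_B_zero)
    qed
  qed
  finally show ?thesis .
qed

section \<open>Slicing the comultiplication\<close>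

text \<open>\<open>left_slice p q\<close> and \<open>right_slice p q\<close> are \<open>torus_coeff p q \<otimes> id\<close> and \<open>id \<otimes> torus_coeff p q\<close>.\<close>

definition left_slice :: "int \<Rightarrow> int \<Rightarrow> 'k::field fa2 \<Rightarrow> 'k fa" where
  "left_slice p q = lin_ext (\<lambda>z. if bc_free (fst z) \<and> left_deg_a (fst z) = p \<and> left_deg_d (fst z) = q
     then wd (snd z) else 0)"
definition right_slice :: "int \<Rightarrow> int \<Rightarrow> 'k::field fa2 \<Rightarrow> 'k fa" where
  "right_slice p q = lin_ext (\<lambda>z. if bc_free (snd z) \<and> left_deg_a (snd z) = p \<and> left_deg_d (snd z) = q
     then wd (fst z) else 0)"

lemma slice_simps [simp]:
  "left_slice p q (x + y) = left_slice p q x + left_slice p q y"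
  "right_slice p q (x + y) = right_slice p q x + right_slice p q y"
  "left_slice p q (x - y) = left_slice p q x - left_slice p q y"
  "right_slice p q (x - y) = right_slice p q x - right_slice p q y"
  "left_slice p q (\<Sum>k\<in>S. f k) = (\<Sum>k\<in>S. left_slice p q (f k))"
  "right_slice p q (\<Sum>k\<in>S. f k) = (\<Sum>k\<in>S. right_slice p q (f k))"
  "left_slice p q 0 = 0" "right_slice p q 0 = 0"
  by (simp_all add: left_slice_def right_slice_def)

lemma left_slice_tens: "left_slice p q (tens x y) = pm_smult (torus_coeff p q x) y"
proof -
  have "left_slice p q (tens x y)
      = lin_ext (\<lambda>u. pm_smult (if bc_free u \<and> left_deg_a u = p \<and> left_deg_d u = q then 1 else 0) y) x"
    unfolding left_slice_def tens_eq_lin_ext lin_ext_lin_ext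
    by (rule lin_ext_cong) (auto simp: lin_ext_if_wd wd_eq_single lin_ext_single_one)
  then show ?thesis by (simp add: lin_ext_fun_const torus_coeff_def)
qed

lemma right_slice_tens: "right_slice p q (tens x y) = pm_smult (torus_coeff p q y) x"
proof -
  have "right_slice p q (tens x y) = lin_ext (\<lambda>u. pm_smult (torus_coeff p q y) (wd u)) x"
    unfolding right_slice_def tens_eq_lin_ext lin_ext_lin_ext torus_coeff_def
    by (rule lin_ext_cong) (simp add: lin_ext_fun_const[symmetric], rule lin_ext_cong, simp)
  then show ?thesis by (simp add: wd_eq_single lin_ext_single_const)
qed

lemma left_slice_tens_ideal: "z \<in> tens_ideal J_B \<Longrightarrow> left_slice p q z \<in> J_B"
  by (induction rule: tens_ideal.induct)
     (auto simp: left_slice_tens torus_coeff_J_B J_B_pm_smult J_B_add J_B_zero)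
lemma right_slice_tens_ideal: "z \<in> tens_ideal J_B \<Longrightarrow> right_slice p q z \<in> J_B"
  by (induction rule: tens_ideal.induct)
     (auto simp: right_slice_tens torus_coeff_J_B J_B_pm_smult J_B_add J_B_zero)

lemma left_slice_fa2_mult_single: "left_slice p q (fa2_mult (single (x, y) 1) H) =
   (if bc_free x then lin_ext (\<lambda>v. wd (y @ v)) (left_slice (p - left_deg_a x) (q - left_deg_d x) H) else 0)"
  unfolding left_slice_def fa2_mult_single_left lin_ext_lin_ext
  by (cases "bc_free x"; simp; rule lin_ext_cong; auto simp: wd_eq_single)
lemma right_slice_fa2_mult_single: "right_slice p q (fa2_mult (single (x, y) 1) H) =
   (if bc_free y then lin_ext (\<lambda>v. wd (x @ v)) (right_slice (p - left_deg_a y) (q - left_deg_d y) H) else 0)"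
  unfolding right_slice_def fa2_mult_single_left lin_ext_lin_ext
  by (cases "bc_free y"; simp; rule lin_ext_cong; auto simp: wd_eq_single)

lemma Delta_gen_eq_single:
  "Delta_gen A = single ([A], [A]) 1 + single ([B], [C]) 1"
  "Delta_gen B = single ([A], [B]) 1 + single ([B], [D]) 1"
  "Delta_gen C = single ([C], [A]) 1 + single ([D], [C]) 1"
  "Delta_gen D = single ([C], [B]) 1 + single ([D], [D]) 1"
  "Delta_gen Dl = single ([Dl], [Dl]) 1"
  "Delta_gen Di = single ([Di], [Di]) 1"
  by (simp_all add: tens_wd)

lemma left_slice_Delta_word:
  "left_slice p q (Delta_word w) = (if left_deg_a w = p \<and> left_deg_d w = q then wd w else 0)"
proof (induction w arbitrary: p q)
  case Nil
  show ?case by (simp add: Delta_word_def left_slice_def wd_eq_single)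
next
  case (Cons g w)
  show ?case
    by (cases g; simp only: Delta_word_Cons Delta_gen_eq_single fa2_mult_add_left slice_simps
          left_slice_fa2_mult_single Cons.IH lin_ext_prepend_if_wd; simp; auto)
qed

lemma right_slice_Delta_word:
  "right_slice p q (Delta_word w) = (if right_deg_a w = p \<and> right_deg_d w = q then wd w else 0)"
proof (induction w arbitrary: p q)
  case Nil
  show ?case by (simp add: Delta_word_def right_slice_def wd_eq_single)
next
  case (Cons g w)
  show ?case
    by (cases g; simp only: Delta_word_Cons Delta_gen_eq_single fa2_mult_add_left slice_simps
          right_slice_fa2_mult_single Cons.IH lin_ext_prepend_if_wd; simp; auto)
qed

lemma left_slice_Delta: "left_slice p q (Delta x) = left_part p q x"
  unfolding Delta_eq_lin_ext left_part_def restrict_words_def left_slice_def lin_ext_lin_ext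
  by (fold left_slice_def) (simp only: left_slice_Delta_word)
lemma right_slice_Delta: "right_slice p q (Delta x) = right_part p q x"
  unfolding Delta_eq_lin_ext right_part_def restrict_words_def right_slice_def lin_ext_lin_ext
  by (fold right_slice_def) (simp only: right_slice_Delta_word)

section \<open>Comodules all of whose weights coincide\<close>

lemma comodule_left_part:
  assumes "is_OB_comodule n X" and "r < n" and "s < n"
  shows "left_part p q (X r s) - (\<Sum>k<n. pm_smult (torus_coeff p q (X k s)) (X r k)) \<in> J_B"
proof -
  have "Delta (X r s) - (\<Sum>k<n. tens (X k s) (X r k)) \<in> tens_ideal J_B"
    using assms unfolding is_OB_comodule_def by blast
  from left_slice_tens_ideal[OF this, of p q] show ?thesis
    by (simp add: left_slice_Delta left_slice_tens)
qed

lemma comodule_right_part: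
  assumes "is_OB_comodule n X" and "r < n" and "s < n"
  shows "right_part p q (X r s) - (\<Sum>k<n. pm_smult (torus_coeff p q (X r k)) (X k s)) \<in> J_B"
proof -
  have "Delta (X r s) - (\<Sum>k<n. tens (X k s) (X r k)) \<in> tens_ideal J_B"
    using assms unfolding is_OB_comodule_def by blast
  from right_slice_tens_ideal[OF this, of p q] show ?thesis
    by (simp add: right_slice_Delta right_slice_tens)
qed

lemma comodule_torus_coeff_orthogonal:
  assumes "is_OB_comodule n X" and "r < n" and "s < n"
  shows "(\<Sum>k<n. torus_coeff p q (X k s) * torus_coeff p' q' (X r k))
    = (if p' = p \<and> q' = q then torus_coeff p q (X r s) else 0)"
proof -
  have "torus_coeff p' q' (left_part p q (X r s) - (\<Sum>k<n. pm_smult (torus_coeff p q (X k s)) (X r k))) = 0"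
    using torus_coeff_J_B comodule_left_part[OF assms] by blast
  then show ?thesis by (simp add: torus_coeff_left_part)
qed

lemma comodule_torus_coeff_column_weight:
  fixes X :: "nat \<Rightarrow> nat \<Rightarrow> 'k::field fa"
  assumes comod: "is_OB_comodule n X" and "s < n"
  shows "in_weight_space n X (mon p q) (\<lambda>k. torus_coeff p q (X k s))"
  unfolding in_weight_space_def fa_smult_eq_pm_smult
proof (intro allI impI)
  fix r assume "r < n"
  define G where "G = insert (p, q) (\<Union>r'<n. \<Union>k<n. left_support (X r' k))"
  have "finite G" unfolding G_def by (simp add: finite_left_support)
  have expand: "X r k - (\<Sum>g\<in>G. pm_smult (torus_coeff (fst g) (snd g) (X r k)) (mon (fst g) (snd g))) \<in> J_T"
    if "k < n" for k
    using torus_expansion[OF \<open>finite G\<close>] \<open>r < n\<close> that unfolding G_def by blast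
  have "(\<Sum>k<n. pm_smult (torus_coeff p q (X k s))
      (\<Sum>g\<in>G. pm_smult (torus_coeff (fst g) (snd g) (X r k)) (mon (fst g) (snd g))))
    = (\<Sum>g\<in>G. pm_smult (\<Sum>k<n. torus_coeff p q (X k s) * torus_coeff (fst g) (snd g) (X r k))
      (mon (fst g) (snd g)))"
    by (simp add: pm_smult_sum_right pm_smult_sum_left sum.swap[of _ G])
  also have "\<dots> = (\<Sum>g\<in>G. if (p, q) = g then pm_smult (torus_coeff p q (X r s)) (mon p q) else 0)"
    by (intro sum.cong refl) (auto simp: comodule_torus_coeff_orthogonal[OF comod \<open>r < n\<close> \<open>s < n\<close>])
  also have "\<dots> = pm_smult (torus_coeff p q (X r s)) (mon p q)"
    using \<open>finite G\<close> by (simp add: G_def)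
  finally have "(\<Sum>k<n. pm_smult (torus_coeff p q (X k s)) (X r k)) - pm_smult (torus_coeff p q (X r s)) (mon p q)
    = (\<Sum>k<n. pm_smult (torus_coeff p q (X k s))
        (X r k - (\<Sum>g\<in>G. pm_smult (torus_coeff (fst g) (snd g) (X r k)) (mon (fst g) (snd g)))))"
    by (simp add: pm_smult_diff_right sum_subtractf)
  also have "\<dots> \<in> J_T"
    using expand unfolding J_T_def by (intro two_sided_ideal_sum two_sided_ideal_smult) auto
  finally show "(\<Sum>k<n. pm_smult (torus_coeff p q (X k s)) (X r k)) - pm_smult (torus_coeff p q (X r s)) (mon p q)
    \<in> J_T" .
qed

lemma comodule_torus_coeff_eq_delta:
  assumes "is_OB_comodule n X" and "r < n" and "s < n"
    and "\<And>p q. (p, q) \<noteq> (i, j) \<Longrightarrow> torus_coeff p q (X r s) = 0"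
  shows "torus_coeff i j (X r s) = (if r = s then 1 else 0)"
proof -
  let ?G = "insert (i, j) (left_support (X r s))"
  have "eps (X r s) = (\<Sum>g\<in>?G. torus_coeff (fst g) (snd g) (X r s))"
    by (rule eps_eq_sum_torus_coeff) (auto simp: finite_left_support)
  also have "\<dots> = torus_coeff i j (X r s) + (\<Sum>g\<in>left_support (X r s) - {(i, j)}. torus_coeff (fst g) (snd g) (X r s))"
    by (simp add: finite_left_support sum.insert_remove)
  also have "(\<Sum>g\<in>left_support (X r s) - {(i, j)}. torus_coeff (fst g) (snd g) (X r s)) = 0"
    by (rule sum.neutral) (use assms(4) in force)
  finally show ?thesis
    using assms(1-3) unfolding is_OB_comodule_def by simp
qed

lemma comodule_entry_eq_mon:
  fixes X :: "nat \<Rightarrow> nat \<Rightarrow> 'k::field fa"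
  assumes comod: "is_OB_comodule n X" and r: "r < n" and s: "s < n"
    and delta: "\<And>r s. r < n \<Longrightarrow> s < n \<Longrightarrow> torus_coeff i j (X r s) = (if r = s then 1 else 0)"
  shows "X r s - (if r = s then mon i j else 0) \<in> J_B"
proof -
  have "(\<Sum>k<n. pm_smult (torus_coeff i j (X k s)) (X r k)) = X r s"
    using s by (simp add: delta if_distrib[of "\<lambda>c. pm_smult c _"] cong: if_cong)
  then have left: "left_part i j (X r s) - X r s \<in> J_B"
    using comodule_left_part[OF comod r s, of i j] by simp
  have "(\<Sum>k<n. pm_smult (torus_coeff i j (X r k)) (X k s)) = X r s"
    using r by (simp add: delta if_distrib[of "\<lambda>c. pm_smult c _"] eq_commute[of r] cong: if_cong)
  then have right: "right_part i j (X r s) - X r s \<in> J_B"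
    using comodule_right_part[OF comod r s, of i j] by simp
  have "left_part i j (X r s - right_part i j (X r s)) \<in> J_B"
    using left_part_J_B J_B_diff[OF J_B_zero right] by simp
  from J_B_diff[OF this left]
  have "X r s - left_part i j (right_part i j (X r s)) \<in> J_B"
    by (simp add: left_part_def restrict_words_def)
  from J_B_add[OF this left_part_right_part_eq_mon[of i j "X r s"]]
  show ?thesis using delta[OF r s] by (cases "r = s") simp_all
qed

theorem mainTheorem15:
  fixes n :: nat and X :: "nat \<Rightarrow> nat \<Rightarrow> 'k::field fa" and i j :: int
  assumes "is_OB_comodule n X"
    and "\<And>p q. is_weight n X (mon p q) \<Longrightarrow> mon p q - mon i j \<in> J_T"
  shows "\<forall>r<n. \<forall>s<n. X r s - (if r = s then mon i j else 0) \<in> J_B"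
proof -
  have off_weight: "torus_coeff p q (X r s) = 0" if "(p, q) \<noteq> (i, j)" "r < n" "s < n" for p q r s
  proof (rule ccontr)
    assume "torus_coeff p q (X r s) \<noteq> 0"
    with \<open>r < n\<close> have "is_weight n X (mon p q)"
      using comodule_torus_coeff_column_weight[OF assms(1) \<open>s < n\<close>, of p q]
      unfolding is_weight_def by (intro exI[of _ "\<lambda>k. torus_coeff p q (X k s)"]) auto
    then show False using mon_diff_J_T_imp_eq assms(2) that(1) by blast
  qed
  have "torus_coeff i j (X r s) = (if r = s then 1 else 0)" if "r < n" "s < n" for r s
    using comodule_torus_coeff_eq_delta[OF assms(1) that] off_weight that by blast
  then show ?thesis
    using comodule_entry_eq_mon[OF assms(1)] by blast
qed

end
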